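(* Let $G,H$ be groups, $\omega_G,\omega_H$ normalized 3-cocycles with values in $\mathbb F^\times$, and $\omega((g_1,h_1),(g_2,h_2),(g_3,h_3)):=\omega_G(g_1,g_2,g_3)\,\omega_H^{-1}(h_3^{-1},h_2^{-1},h_1^{-1})$. Fix a $G\times H$-set $X$. The assignments $\mathcal B(X,\Psi,\Phi,\Omega)\mapsto\mathcal M(X,\Gamma')$ and $\mathcal M(X,\Gamma)\mapsto\mathcal B(X,\tilde\Psi,\tilde\Phi,\tilde\Omega)$, where $$\Gamma'((g_1,h_1),(g_2,h_2),x)=\Psi(g_1,g_2,(h_2^{-1}h_1^{-1})\cdot x)\,\Phi(h_1,h_2,x)\,\Omega(g_1,h_2,h_1^{-1}\cdot x),$$ $$\tilde\Psi(g_1,g_2,x)=\Gamma((g_1,1),(g_2,1),x),\ \tilde\Phi(h_1,h_2,x)=\Gamma((1,h_1),(1,h_2),x),\ \tilde\Omega(g,h,x)=\Gamma((g,1),(1,h),x),$$ are well defined and mutually inverse bijections between the semisimple $(\mathrm{Vec}_G^{\omega_G},\mathrm{Vec}_H^{\omega_H})$-bimodule categories of the form $\mathcal B(X,\Psi,\Phi,\Omega)$ and the semisimple $\mathrm{Vec}_{G\times H}^\omega$-module categories of the form $\mathcal M(X,\Gamma)$.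
   Context: $\mathbb F$ algebraically closed; $\mathrm{Vec}_K^\eta$ as usual (finite-dimensional $K$-graded spaces, $\delta^k\otimes\delta^{k'}=\delta^{kk'}$, associator $\eta$). In the $G\times H$-set $X$ write $g\cdot x=(g,1)\cdot x$ and $h\cdot x=(1,h)\cdot x$. The data $\mathcal B(X,\Psi,\Phi,\Omega)$: normalized maps $\Psi:G\times G\times X\to\mathbb F^\times$, $\Phi:H\times H\times X\to\mathbb F^\times$, $\Omega:G\times H\times X\to\mathbb F^\times$ with $\Psi(g_2,g_3,g_1^{-1}\cdot x)\Psi^{-1}(g_1g_2,g_3,x)\Psi(g_1,g_2g_3,x)\Psi^{-1}(g_1,g_2,x)=\omega_G^{-1}(g_1,g_2,g_3)$; $\Phi(h_2,h_3,h_1^{-1}\cdot x)\Phi^{-1}(h_1h_2,h_3,x)\Phi(h_1,h_2h_3,x)\Phi^{-1}(h_1,h_2,x)=\omega_H(h_3^{-1},h_2^{-1},h_1^{-1})$; $\Omega(g_2,h,g_1^{-1}\cdot x)\Omega^{-1}(g_1g_2,h,x)\Omega(g_1,h,x)=\Psi(g_1,g_2,x)\Psi^{-1}(g_1,g_2,h^{-1}\cdot x)$; $\Omega(g,h_2,h_1^{-1}\cdot x)\Omega^{-1}(g,h_1h_2,x)\Omega(g,h_1,x)=\Phi^{-1}(h_1,h_2,x)\Phi(h_1,h_2,g^{-1}\cdot x)$. The bimodule category $\mathcal B(X,\Psi,\Phi,\Omega)$ is the category of finite-dimensional $X$-graded spaces with $\delta^g\triangleright x=g\cdot x$, $x\triangleleft\delta^h=h^{-1}\cdot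 x$, left constraint $m_{g_1,g_2,x}=\Psi(g_1,g_2,(g_1g_2)\cdot x)\mathrm{id}$, right constraint $n_{x,h_1,h_2}=\Phi(h_2^{-1},h_1^{-1},(h_1h_2)^{-1}\cdot x)\mathrm{id}:x\triangleleft(\delta^{h_1}\otimes\delta^{h_2})\to(x\triangleleft\delta^{h_1})\triangleleft\delta^{h_2}$, and middle constraint $b_{g,x,h}=\Omega(g,h^{-1},(g,h^{-1})\cdot x)\mathrm{id}:(\delta^g\triangleright x)\triangleleft\delta^h\to\delta^g\triangleright(x\triangleleft\delta^h)$. The data $\mathcal M(X,\Gamma)$: normalized $\Gamma:(G\times H)^2\times X\to\mathbb F^\times$ with $\Gamma(u_2,u_3,u_1^{-1}\cdot x)\Gamma^{-1}(u_1u_2,u_3,x)\Gamma(u_1,u_2u_3,x)\Gamma^{-1}(u_1,u_2,x)=\omega^{-1}(u_1,u_2,u_3)$ and additionally $\Gamma((1,h),(g,1),x)=1$ for all $g,h,x$; $\mathcal M(X,\Gamma)$ is the $\mathrm{Vec}_{G\times H}^\omega$-module category of $X$-graded spaces with $\delta^u\triangleright x=u\cdot x$ and constraint $\Gamma(u,v,(uv)\cdot x)\mathrm{id}$. *)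

theory Defs
  imports "HOL-Computational_Algebra.Polynomial"
begin

class mgroup = times + one + inverse +
  assumes mg_assoc: "(a * b) * c = a * (b * c)"
    and mg_left_one: "1 * a = a"
    and mg_left_inv: "inverse a * a = 1"

definition pmul :: "'g::mgroup \<times> 'h::mgroup \<Rightarrow> 'g \<times> 'h \<Rightarrow> 'g \<times> 'h" where
  "pmul u v = (fst u * fst v, snd u * snd v)"
definition pone :: "'g::mgroup \<times> 'h::mgroup" where
  "pone = (1, 1)"
definition pinv :: "'g::mgroup \<times> 'h::mgroup \<Rightarrow> 'g \<times> 'h" where
  "pinv u = (inverse (fst u), inverse (snd u))"

definition is_GH_set :: "('g::mgroup \<times> 'h::mgroup \<Rightarrow> 'x \<Rightarrow> 'x) \<Rightarrow> bool" where
  "is_GH_set act \<longleftrightarrow> (\<forall>x. act pone x = x) \<and> (\<forall>u v x. act (pmul u v) x = act u (act v x))"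

definition normalized_3cocycle :: "('g::mgroup \<Rightarrow> 'g \<Rightarrow> 'g \<Rightarrow> 'k::field) \<Rightarrow> bool" where
  "normalized_3cocycle w \<longleftrightarrow>
     (\<forall>a b c. w a b c \<noteq> 0) \<and>
     (\<forall>a b. w 1 a b = 1 \<and> w a 1 b = 1 \<and> w a b 1 = 1) \<and>
     (\<forall>a b c d. w b c d * w a (b * c) d * w a b c = w (a * b) c d * w a b (c * d))"

definition omega_prod :: "('g::mgroup \<Rightarrow> 'g \<Rightarrow> 'g \<Rightarrow> 'k::field) \<Rightarrow> ('h::mgroup \<Rightarrow> 'h \<Rightarrow> 'h \<Rightarrow> 'k)
    \<Rightarrow> 'g \<times> 'h \<Rightarrow> 'g \<times> 'h \<Rightarrow> 'g \<times> 'h \<Rightarrow> 'k" where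
  "omega_prod wG wH u1 u2 u3 =
     wG (fst u1) (fst u2) (fst u3) * inverse (wH (inverse (snd u3)) (inverse (snd u2)) (inverse (snd u1)))"

text \<open>Data B(X,Psi,Phi,Omega). Notation: g.x = act (g,1) x, h.x = act (1,h) x.\<close>
definition is_B_data ::
  "('g::mgroup \<Rightarrow> 'g \<Rightarrow> 'g \<Rightarrow> 'k::field) \<Rightarrow> ('h::mgroup \<Rightarrow> 'h \<Rightarrow> 'h \<Rightarrow> 'k) \<Rightarrow> ('g \<times> 'h \<Rightarrow> 'x \<Rightarrow> 'x)
   \<Rightarrow> ('g \<Rightarrow> 'g \<Rightarrow> 'x \<Rightarrow> 'k) \<Rightarrow> ('h \<Rightarrow> 'h \<Rightarrow> 'x \<Rightarrow> 'k) \<Rightarrow> ('g \<Rightarrow> 'h \<Rightarrow> 'x \<Rightarrow> 'k) \<Rightarrow> bool" where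
  "is_B_data wG wH act Psi Phi Omega \<longleftrightarrow>
     (\<forall>a b x. Psi a b x \<noteq> 0) \<and> (\<forall>a b x. Phi a b x \<noteq> 0) \<and> (\<forall>a b x. Omega a b x \<noteq> 0) \<and>
     (\<forall>g x. Psi 1 g x = 1 \<and> Psi g 1 x = 1) \<and>
     (\<forall>h x. Phi 1 h x = 1 \<and> Phi h 1 x = 1) \<and>
     (\<forall>g h x. Omega 1 h x = 1 \<and> Omega g 1 x = 1) \<and>
     (\<forall>g1 g2 g3 x.
        Psi g2 g3 (act (inverse g1, 1) x) * inverse (Psi (g1 * g2) g3 x) * Psi g1 (g2 * g3) x
          * inverse (Psi g1 g2 x) = inverse (wG g1 g2 g3)) \<and>
     (\<forall>h1 h2 h3 x.
        Phi h2 h3 (act (1, inverse h1) x) * inverse (Phi (h1 * h2) h3 x) * Phi h1 (h2 * h3) x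
          * inverse (Phi h1 h2 x) = wH (inverse h3) (inverse h2) (inverse h1)) \<and>
     (\<forall>g1 g2 h x.
        Omega g2 h (act (inverse g1, 1) x) * inverse (Omega (g1 * g2) h x) * Omega g1 h x
          = Psi g1 g2 x * inverse (Psi g1 g2 (act (1, inverse h) x))) \<and>
     (\<forall>g h1 h2 x.
        Omega g h2 (act (1, inverse h1) x) * inverse (Omega g (h1 * h2) x) * Omega g h1 x
          = inverse (Phi h1 h2 x) * Phi h1 h2 (act (inverse g, 1) x))"

definition is_M_data ::
  "('g::mgroup \<times> 'h::mgroup \<Rightarrow> 'g \<times> 'h \<Rightarrow> 'g \<times> 'h \<Rightarrow> 'k::field) \<Rightarrow> ('g \<times> 'h \<Rightarrow> 'x \<Rightarrow> 'x)
   \<Rightarrow> ('g \<times> 'h \<Rightarrow> 'g \<times> 'h \<Rightarrow> 'x \<Rightarrow> 'k) \<Rightarrow> bool" where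
  "is_M_data w act Gamma \<longleftrightarrow>
     (\<forall>u v x. Gamma u v x \<noteq> 0) \<and>
     (\<forall>u x. Gamma pone u x = 1 \<and> Gamma u pone x = 1) \<and>
     (\<forall>u1 u2 u3 x.
        Gamma u2 u3 (act (pinv u1) x) * inverse (Gamma (pmul u1 u2) u3 x) * Gamma u1 (pmul u2 u3) x
          * inverse (Gamma u1 u2 x) = inverse (w u1 u2 u3)) \<and>
     (\<forall>g h x. Gamma (1, h) (g, 1) x = 1)"

definition Gamma_of :: "('g::mgroup \<times> 'h::mgroup \<Rightarrow> 'x \<Rightarrow> 'x)
   \<Rightarrow> ('g \<Rightarrow> 'g \<Rightarrow> 'x \<Rightarrow> 'k::field) \<Rightarrow> ('h \<Rightarrow> 'h \<Rightarrow> 'x \<Rightarrow> 'k) \<Rightarrow> ('g \<Rightarrow> 'h \<Rightarrow> 'x \<Rightarrow> 'k)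
   \<Rightarrow> 'g \<times> 'h \<Rightarrow> 'g \<times> 'h \<Rightarrow> 'x \<Rightarrow> 'k" where
  "Gamma_of act Psi Phi Omega u1 u2 x =
     Psi (fst u1) (fst u2) (act (1, inverse (snd u2) * inverse (snd u1)) x)
     * Phi (snd u1) (snd u2) x
     * Omega (fst u1) (snd u2) (act (1, inverse (snd u1)) x)"

definition Psi_of :: "('g::mgroup \<times> 'h::mgroup \<Rightarrow> 'g \<times> 'h \<Rightarrow> 'x \<Rightarrow> 'k) \<Rightarrow> 'g \<Rightarrow> 'g \<Rightarrow> 'x \<Rightarrow> 'k" where
  "Psi_of Gamma g1 g2 x = Gamma (g1, 1) (g2, 1) x"
definition Phi_of :: "('g::mgroup \<times> 'h::mgroup \<Rightarrow> 'g \<times> 'h \<Rightarrow> 'x \<Rightarrow> 'k) \<Rightarrow> 'h \<Rightarrow> 'h \<Rightarrow> 'x \<Rightarrow> 'k" where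
  "Phi_of Gamma h1 h2 x = Gamma (1, h1) (1, h2) x"
definition Omega_of :: "('g::mgroup \<times> 'h::mgroup \<Rightarrow> 'g \<times> 'h \<Rightarrow> 'x \<Rightarrow> 'k) \<Rightarrow> 'g \<Rightarrow> 'h \<Rightarrow> 'x \<Rightarrow> 'k" where
  "Omega_of Gamma g h x = Gamma (g, 1) (1, h) x"

end

theory Submission
  imports Defs
begin

text \<open>
  Since \<open>\<omega>\<close> is trivial on every triple in which some \<open>G\<close>-coordinate and some
  \<open>H\<close>-coordinate equal \<open>1\<close>, the corresponding instances of the cocycle condition of
  \<open>\<Gamma>\<close>, together with the normalisation \<open>\<Gamma>((1,h),(g,1)) = 1\<close>, express
  \<open>\<Gamma>((g\<^sub>1,h\<^sub>1),(g\<^sub>2,h\<^sub>2))\<close> through its restrictions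
  \<open>\<Psi>\<close>, \<open>\<Phi>\<close>, \<open>\<Omega>\<close> exactly as \<open>\<Gamma>'\<close> does, and these instances
  restrict to the four conditions on B-data. Conversely, the cocycle condition of \<open>\<Gamma>'\<close> is
  the product of the four B-data conditions at suitably translated points.
\<close>

context mgroup
begin

lemma mg_right_inv: "a * inverse a = 1"
proof -
  have "a * inverse a = (inverse (inverse a) * inverse a) * (a * inverse a)"
    by (simp add: mg_left_inv mg_left_one)
  also have "\<dots> = inverse (inverse a) * ((inverse a * a) * inverse a)"
    by (simp add: mg_assoc)
  also have "\<dots> = 1"
    by (simp add: mg_left_inv mg_left_one)
  finally show ?thesis .
qed

lemma mg_right_one: "a * 1 = a"
  by (metis mg_assoc mg_left_inv mg_right_inv mg_left_one)

lemma mg_inv_one: "inverse 1 = 1"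
  by (metis mg_left_inv mg_right_one)

lemma mg_inv_mult: "inverse (a * b) = inverse b * inverse a"
proof -
  have "(a * b) * (inverse b * inverse a) = 1"
    by (metis mg_assoc mg_left_one mg_right_inv)
  then show ?thesis
    by (metis mg_assoc mg_left_inv mg_left_one mg_right_one)
qed

end

lemmas mg_simps = mg_assoc mg_left_one mg_right_one mg_left_inv mg_right_inv mg_inv_one mg_inv_mult

lemma GH_set_act_act: "is_GH_set act \<Longrightarrow> act u (act v x) = act (pmul u v) x"
  unfolding is_GH_set_def by metis

lemma GH_set_act_one: "is_GH_set act \<Longrightarrow> act (1, 1) x = x"
  unfolding is_GH_set_def pone_def by simp

lemma normalized_3cocycle_nonzero: "normalized_3cocycle w \<Longrightarrow> w a b c \<noteq> 0"
  unfolding normalized_3cocycle_def by blast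

lemma normalized_3cocycle_eq_1:
  "normalized_3cocycle w \<Longrightarrow> a = 1 \<or> b = 1 \<or> c = 1 \<Longrightarrow> w a b c = 1"
  unfolding normalized_3cocycle_def by blast

lemma omega_prod_nonzero:
  "normalized_3cocycle wG \<Longrightarrow> normalized_3cocycle wH \<Longrightarrow> omega_prod wG wH u1 u2 u3 \<noteq> 0"
  unfolding omega_prod_def by (simp add: normalized_3cocycle_nonzero)

lemma omega_prod_eq_1:
  assumes "normalized_3cocycle wG" "normalized_3cocycle wH"
    and "fst u1 = 1 \<or> fst u2 = 1 \<or> fst u3 = 1" "snd u1 = 1 \<or> snd u2 = 1 \<or> snd u3 = 1"
  shows "omega_prod wG wH u1 u2 u3 = 1"
  using assms unfolding omega_prod_def
  by (auto simp: normalized_3cocycle_eq_1 mg_inv_one)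

lemma is_M_data_iff:
  assumes "\<And>u1 u2 u3. w u1 u2 u3 \<noteq> 0"
  shows "is_M_data w act Gamma \<longleftrightarrow>
     (\<forall>u v x. Gamma u v x \<noteq> 0) \<and>
     (\<forall>u x. Gamma pone u x = 1 \<and> Gamma u pone x = 1) \<and>
     (\<forall>u1 u2 u3 x.
        Gamma u2 u3 (act (pinv u1) x) * Gamma u1 (pmul u2 u3) x * w u1 u2 u3
          = Gamma (pmul u1 u2) u3 x * Gamma u1 u2 x) \<and>
     (\<forall>g h x. Gamma (1, h) (g, 1) x = 1)"
  unfolding is_M_data_def
  by (simp add: field_simps assms cong: conj_cong del: split_paired_All)

lemma is_B_data_iff:
  assumes "\<And>g1 g2 g3. wG g1 g2 g3 \<noteq> 0"
  shows "is_B_data wG wH act Psi Phi Omega \<longleftrightarrow>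
     (\<forall>a b x. Psi a b x \<noteq> 0) \<and> (\<forall>a b x. Phi a b x \<noteq> 0) \<and> (\<forall>a b x. Omega a b x \<noteq> 0) \<and>
     (\<forall>g x. Psi 1 g x = 1 \<and> Psi g 1 x = 1) \<and>
     (\<forall>h x. Phi 1 h x = 1 \<and> Phi h 1 x = 1) \<and>
     (\<forall>g h x. Omega 1 h x = 1 \<and> Omega g 1 x = 1) \<and>
     (\<forall>g1 g2 g3 x.
        Psi g2 g3 (act (inverse g1, 1) x) * Psi g1 (g2 * g3) x * wG g1 g2 g3
          = Psi (g1 * g2) g3 x * Psi g1 g2 x) \<and>
     (\<forall>h1 h2 h3 x.
        Phi h2 h3 (act (1, inverse h1) x) * Phi h1 (h2 * h3) x
          = Phi (h1 * h2) h3 x * Phi h1 h2 x * wH (inverse h3) (inverse h2) (inverse h1)) \<and>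
     (\<forall>g1 g2 h x.
        Omega g2 h (act (inverse g1, 1) x) * Omega g1 h x * Psi g1 g2 (act (1, inverse h) x)
          = Psi g1 g2 x * Omega (g1 * g2) h x) \<and>
     (\<forall>g h1 h2 x.
        Omega g h2 (act (1, inverse h1) x) * Omega g h1 x * Phi h1 h2 x
          = Phi h1 h2 (act (inverse g, 1) x) * Omega g (h1 * h2) x)"
  unfolding is_B_data_def
  by (simp add: field_simps assms cong: conj_cong)

lemma Gamma_of_cocycle:
  fixes Psi :: "'g::mgroup \<Rightarrow> 'g \<Rightarrow> 'x \<Rightarrow> 'k::field" and Phi :: "'h::mgroup \<Rightarrow> 'h \<Rightarrow> 'x \<Rightarrow> 'k"
  assumes cG: "normalized_3cocycle wG" and cH: "normalized_3cocycle wH" and A: "is_GH_set act"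
    and B: "is_B_data wG wH act Psi Phi Omega"
  shows "Gamma_of act Psi Phi Omega u2 u3 (act (pinv u1) x) * Gamma_of act Psi Phi Omega u1 (pmul u2 u3) x
           * omega_prod wG wH u1 u2 u3
         = Gamma_of act Psi Phi Omega (pmul u1 u2) u3 x * Gamma_of act Psi Phi Omega u1 u2 x"
proof -
  obtain g1 h1 g2 h2 g3 h3 where u: "u1 = (g1, h1)" "u2 = (g2, h2)" "u3 = (g3, h3)"
    by (cases u1, cases u2, cases u3) simp
  let ?w = "act (1, inverse h1) x"
  let ?z = "act (1, inverse (h1 * h2)) x"
  let ?y = "act (1, inverse (h1 * h2 * h3)) x"
  let ?\<Gamma> = "Gamma_of act Psi Phi Omega"
  let ?\<omega>H = "wH (inverse h3) (inverse h2) (inverse h1)"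
  note B' = B[unfolded is_B_data_iff[OF normalized_3cocycle_nonzero[OF cG]]]
  have B1: "Psi g2 g3 (act (inverse g1, 1) ?y) * Psi g1 (g2 * g3) ?y * wG g1 g2 g3
      = Psi (g1 * g2) g3 ?y * Psi g1 g2 ?y" (is "?B1l = ?B1r")
    using B' by blast
  have B2: "Phi h2 h3 ?w * Phi h1 (h2 * h3) x = Phi (h1 * h2) h3 x * Phi h1 h2 x * ?\<omega>H"
    (is "?B2l = ?B2r")
    using B' by blast
  have B3: "Omega g2 h3 (act (inverse g1, 1) ?z) * Omega g1 h3 ?z * Psi g1 g2 (act (1, inverse h3) ?z)
      = Psi g1 g2 ?z * Omega (g1 * g2) h3 ?z" (is "?B3l = ?B3r")
    using B' by blast
  have B4: "Omega g1 h3 (act (1, inverse h2) ?w) * Omega g1 h2 ?w * Phi h2 h3 ?w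
      = Phi h2 h3 (act (inverse g1, 1) ?w) * Omega g1 (h2 * h3) ?w" (is "?B4l = ?B4r")
    using B' by blast
  note S = Gamma_of_def u pmul_def pinv_def GH_set_act_act[OF A] mg_simps
  txt \<open>The factor \<open>?K\<close> collects the terms that occur on both sides of the product.\<close>
  let ?K = "Psi g1 g2 ?y * Omega g1 h3 ?z * Phi h2 h3 ?w"
  have "?\<Gamma> u2 u3 (act (pinv u1) x) * ?\<Gamma> u1 (pmul u2 u3) x * wG g1 g2 g3 * ?K
      = ?B1l * ?B2l * ?B3l * ?B4r"
    by (simp add: S ac_simps)
  also have "\<dots> = ?B1r * ?B2r * ?B3r * ?B4l"
    by (simp only: B1 B2 B3 B4)
  also have "\<dots> = ?\<Gamma> (pmul u1 u2) u3 x * ?\<Gamma> u1 u2 x * ?\<omega>H * ?K"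
    by (simp add: S ac_simps)
  finally have "?\<Gamma> u2 u3 (act (pinv u1) x) * ?\<Gamma> u1 (pmul u2 u3) x * wG g1 g2 g3
      = ?\<Gamma> (pmul u1 u2) u3 x * ?\<Gamma> u1 u2 x * ?\<omega>H"
    using B' by simp
  then show ?thesis
    using normalized_3cocycle_nonzero[OF cH] by (simp add: omega_prod_def u field_simps)
qed

lemma is_M_data_Gamma_of:
  fixes Psi :: "'g::mgroup \<Rightarrow> 'g \<Rightarrow> 'x \<Rightarrow> 'k::field" and Phi :: "'h::mgroup \<Rightarrow> 'h \<Rightarrow> 'x \<Rightarrow> 'k"
  assumes cG: "normalized_3cocycle wG" and cH: "normalized_3cocycle wH" and A: "is_GH_set act"
    and B: "is_B_data wG wH act Psi Phi Omega"
  shows "is_M_data (omega_prod wG wH) act (Gamma_of act Psi Phi Omega)"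
  unfolding is_M_data_iff[OF omega_prod_nonzero[OF cG cH]]
  using B Gamma_of_cocycle[OF assms]
  by (simp add: is_B_data_def Gamma_of_def pone_def GH_set_act_one[OF A] mg_inv_one)

lemma Psi_of_Gamma_of:
  "is_GH_set act \<Longrightarrow> is_B_data wG wH act Psi Phi Omega \<Longrightarrow> Psi_of (Gamma_of act Psi Phi Omega) = Psi"
  by (intro ext) (simp add: is_B_data_def Psi_of_def Gamma_of_def mg_simps GH_set_act_one)

lemma Phi_of_Gamma_of:
  "is_GH_set act \<Longrightarrow> is_B_data wG wH act Psi Phi Omega \<Longrightarrow> Phi_of (Gamma_of act Psi Phi Omega) = Phi"
  by (intro ext) (simp add: is_B_data_def Phi_of_def Gamma_of_def mg_simps GH_set_act_one)

lemma Omega_of_Gamma_of: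
  "is_GH_set act \<Longrightarrow> is_B_data wG wH act Psi Phi Omega \<Longrightarrow> Omega_of (Gamma_of act Psi Phi Omega) = Omega"
  by (intro ext) (simp add: is_B_data_def Omega_of_def Gamma_of_def mg_simps GH_set_act_one)

lemma is_M_data_cocycle:
  assumes "is_M_data w act Gamma" "\<And>u1 u2 u3. w u1 u2 u3 \<noteq> 0"
  shows "Gamma u2 u3 (act (pinv u1) x) * Gamma u1 (pmul u2 u3) x * w u1 u2 u3
       = Gamma (pmul u1 u2) u3 x * Gamma u1 u2 x"
  using assms(1) unfolding is_M_data_iff[OF assms(2)] by blast

lemma is_M_data_mixed_cocycle:
  assumes cG: "normalized_3cocycle wG" and cH: "normalized_3cocycle wH"
    and M: "is_M_data (omega_prod wG wH) act Gamma"
    and "fst u1 = 1 \<or> fst u2 = 1 \<or> fst u3 = 1" "snd u1 = 1 \<or> snd u2 = 1 \<or> snd u3 = 1"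
  shows "Gamma u2 u3 (act (pinv u1) x) * Gamma u1 (pmul u2 u3) x = Gamma (pmul u1 u2) u3 x * Gamma u1 u2 x"
  using is_M_data_cocycle[OF M omega_prod_nonzero[OF cG cH], of u2 u3 u1 x] omega_prod_eq_1[OF assms(1,2,4,5)]
  by simp

lemma is_M_data_normalized:
  assumes "is_M_data w act Gamma"
  shows "Gamma (1, 1) v x = 1" "Gamma u (1, 1) x = 1" "Gamma (1, h) (g, 1) x = 1"
  using assms unfolding is_M_data_def pone_def by (simp_all del: split_paired_All)

context
  fixes wG :: "'g::mgroup \<Rightarrow> 'g \<Rightarrow> 'g \<Rightarrow> 'k::field" and wH :: "'h::mgroup \<Rightarrow> 'h \<Rightarrow> 'h \<Rightarrow> 'k"
    and act :: "'g \<times> 'h \<Rightarrow> 'x \<Rightarrow> 'x" and Gamma :: "'g \<times> 'h \<Rightarrow> 'g \<times> 'h \<Rightarrow> 'x \<Rightarrow> 'k"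
  assumes cG: "normalized_3cocycle wG" and cH: "normalized_3cocycle wH" and A: "is_GH_set act"
    and M: "is_M_data (omega_prod wG wH) act Gamma"
begin

private lemmas mixed = is_M_data_mixed_cocycle[OF cG cH M]
private lemmas S = pmul_def pinv_def mg_simps GH_set_act_act[OF A] GH_set_act_one[OF A]
  is_M_data_normalized[OF M]

lemma is_M_data_Gamma_split:
  "Gamma (g, h) v x = Gamma (g, 1) v (act (1, inverse h) x) * Gamma (1, h) (pmul (g, 1) v) x"
  using mixed[of "(1, h)" "(g, 1)" v x] by (simp add: S)

lemma is_M_data_Gamma_left_G:
  "Gamma (g1, 1) (g2, h) x = Gamma (g1, 1) (g2, 1) (act (1, inverse h) x) * Gamma (g1, 1) (1, h) x"
  using mixed[of "(g1, 1)" "(1, h)" "(g2, 1)" x] is_M_data_Gamma_split[of g1 h "(g2, 1)" x]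
  by (simp add: S)

lemma is_M_data_Gamma_left_H: "Gamma (1, h1) (g, h2) x = Gamma (1, h1) (1, h2) x"
  using mixed[of "(1, h1)" "(1, h2)" "(g, 1)" x] by (simp add: S)

lemma Gamma_of_Psi_Phi_Omega_of: "Gamma_of act (Psi_of Gamma) (Phi_of Gamma) (Omega_of Gamma) = Gamma"
proof (intro ext)
  fix u v :: "'g \<times> 'h" and x :: 'x
  obtain g1 h1 g2 h2 where uv: "u = (g1, h1)" "v = (g2, h2)"
    by (cases u, cases v) simp
  let ?y = "act (1, inverse h1) x"
  have "Gamma u v x = Gamma (g1, 1) (g2, h2) ?y * Gamma (1, h1) (g1 * g2, h2) x"
    using is_M_data_Gamma_split[of g1 h1 v x] by (simp add: uv pmul_def mg_simps)
  also have "\<dots> = Gamma (g1, 1) (g2, 1) (act (1, inverse h2) ?y) * Gamma (g1, 1) (1, h2) ?y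
      * Gamma (1, h1) (1, h2) x"
    by (simp only: is_M_data_Gamma_left_G[of g1 g2 h2] is_M_data_Gamma_left_H[of h1 "g1 * g2" h2])
  also have "\<dots> = Gamma_of act (Psi_of Gamma) (Phi_of Gamma) (Omega_of Gamma) u v x"
    unfolding uv Gamma_of_def Psi_of_def Phi_of_def Omega_of_def by (simp add: S ac_simps)
  finally show "Gamma_of act (Psi_of Gamma) (Phi_of Gamma) (Omega_of Gamma) u v x = Gamma u v x" ..
qed

lemma is_B_data_Psi_Phi_Omega_of: "is_B_data wG wH act (Psi_of Gamma) (Phi_of Gamma) (Omega_of Gamma)"
proof -
  note cocycle = is_M_data_cocycle[OF M omega_prod_nonzero[OF cG cH]]
  have Psi: "Psi_of Gamma g2 g3 (act (inverse g1, 1) x) * Psi_of Gamma g1 (g2 * g3) x * wG g1 g2 g3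
      = Psi_of Gamma (g1 * g2) g3 x * Psi_of Gamma g1 g2 x" for g1 g2 g3 x
    using cocycle[of "(g2, 1)" "(g3, 1)" "(g1, 1)" x]
    by (simp add: Psi_of_def omega_prod_def normalized_3cocycle_eq_1[OF cH] S)
  have Phi: "Phi_of Gamma h2 h3 (act (1, inverse h1) x) * Phi_of Gamma h1 (h2 * h3) x
      = Phi_of Gamma (h1 * h2) h3 x * Phi_of Gamma h1 h2 x * wH (inverse h3) (inverse h2) (inverse h1)"
    for h1 h2 h3 x
    using cocycle[of "(1, h2)" "(1, h3)" "(1, h1)" x] normalized_3cocycle_nonzero[OF cH]
    by (simp add: Phi_of_def omega_prod_def normalized_3cocycle_eq_1[OF cG] S field_simps)
  have Omega_G: "Omega_of Gamma g2 h (act (inverse g1, 1) x) * Omega_of Gamma g1 h x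
      * Psi_of Gamma g1 g2 (act (1, inverse h) x) = Psi_of Gamma g1 g2 x * Omega_of Gamma (g1 * g2) h x"
    for g1 g2 h x
    using mixed[of "(g1, 1)" "(g2, 1)" "(1, h)" x] is_M_data_Gamma_left_G[of g1 g2 h x]
    by (simp add: Omega_of_def Psi_of_def S ac_simps)
  have Omega_H: "Omega_of Gamma g h2 (act (1, inverse h1) x) * Omega_of Gamma g h1 x * Phi_of Gamma h1 h2 x
      = Phi_of Gamma h1 h2 (act (inverse g, 1) x) * Omega_of Gamma g (h1 * h2) x" for g h1 h2 x
    using mixed[of "(g, 1)" "(1, h1)" "(1, h2)" x] is_M_data_Gamma_split[of g h1 "(1, h2)" x]
      is_M_data_Gamma_left_H[of h1 g h2 x]
    by (simp add: Omega_of_def Phi_of_def S ac_simps)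
  show ?thesis
    unfolding is_B_data_iff[OF normalized_3cocycle_nonzero[OF cG]]
    using Psi Phi Omega_G Omega_H M
    by (simp add: is_M_data_def Psi_of_def Phi_of_def Omega_of_def pone_def del: split_paired_All)
qed

end

theorem proposition4p27:
  fixes wG :: "'g::mgroup \<Rightarrow> 'g \<Rightarrow> 'g \<Rightarrow> 'k::alg_closed_field"
    and wH :: "'h::mgroup \<Rightarrow> 'h \<Rightarrow> 'h \<Rightarrow> 'k"
    and act :: "'g \<times> 'h \<Rightarrow> 'x \<Rightarrow> 'x"
  assumes "normalized_3cocycle wG"
    and "normalized_3cocycle wH"
    and "is_GH_set act"
  shows "(\<forall>Psi Phi Omega. is_B_data wG wH act Psi Phi Omega
            \<longrightarrow> is_M_data (omega_prod wG wH) act (Gamma_of act Psi Phi Omega))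
       \<and> (\<forall>Gamma. is_M_data (omega_prod wG wH) act Gamma
            \<longrightarrow> is_B_data wG wH act (Psi_of Gamma) (Phi_of Gamma) (Omega_of Gamma))
       \<and> (\<forall>Psi Phi Omega. is_B_data wG wH act Psi Phi Omega
            \<longrightarrow> Psi_of (Gamma_of act Psi Phi Omega) = Psi
              \<and> Phi_of (Gamma_of act Psi Phi Omega) = Phi
              \<and> Omega_of (Gamma_of act Psi Phi Omega) = Omega)
       \<and> (\<forall>Gamma. is_M_data (omega_prod wG wH) act Gamma
            \<longrightarrow> Gamma_of act (Psi_of Gamma) (Phi_of Gamma) (Omega_of Gamma) = Gamma)"
  using is_M_data_Gamma_of[OF assms] is_B_data_Psi_Phi_Omega_of[OF assms]
    Psi_of_Gamma_of[OF assms(3)] Phi_of_Gamma_of[OF assms(3)] Omega_of_Gamma_of[OF assms(3)]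
    Gamma_of_Psi_Phi_Omega_of[OF assms]
  by blast

end
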